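(* Let $\Gamma$ be a finite connected $(G,2)$-distance-transitive graph of valency $k\ge2$. If $\gcd(b_1,k)=1$ and $c_2\mid k$, then $\Gamma$ is $(G,2)$-geodesic-transitive. In particular, if $\gcd(b_1,k)=1$ and $\gcd(b_1,c_2)=1$, then $\Gamma$ is $(G,2)$-geodesic-transitive.
   Context: For $G\le\mathrm{Aut}(\Gamma)$, $\Gamma$ is $(G,2)$-distance-transitive if its diameter is at least $2$, $G$ is vertex-transitive and $G_u$ is transitive on $\Gamma(u)$ and $\Gamma_2(u)$ for each $u$. For $u$ and $w$ at distance $i\le2$, $b_i$ (resp. $c_i$) denotes the number of neighbours of $w$ at distance $i+1$ (resp. $i-1$) from $u$; these are independent of $u,w$. A $2$-geodesic is a triple $(u,v,w)$ with $u\sim v\sim w$, $u\ne w$, $u\not\sim w$; $\Gamma$ is $(G,2)$-geodesic-transitive if it is $G$-arc-transitive, non-complete, and $G$ is transitive on $2$-geodesics. *)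

theory Defs
  imports Main
begin

definition simple_graph :: "'a set \<Rightarrow> ('a \<Rightarrow> 'a \<Rightarrow> bool) \<Rightarrow> bool" where
  "simple_graph V E \<longleftrightarrow> finite V \<and> (\<forall>u\<in>V. \<forall>v\<in>V. E u v \<longleftrightarrow> E v u) \<and> (\<forall>u\<in>V. \<not> E u u)"

definition edges :: "'a set \<Rightarrow> ('a \<Rightarrow> 'a \<Rightarrow> bool) \<Rightarrow> ('a \<times> 'a) set" where
  "edges V E = {(x, y). x \<in> V \<and> y \<in> V \<and> E x y}"

definition connected_graph :: "'a set \<Rightarrow> ('a \<Rightarrow> 'a \<Rightarrow> bool) \<Rightarrow> bool" where
  "connected_graph V E \<longleftrightarrow> (\<forall>u\<in>V. \<forall>v\<in>V. (u, v) \<in> (edges V E)\<^sup>*)"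

text \<open>Graph distance: least length of a walk (meaningful for connected graphs).\<close>
definition gdist :: "'a set \<Rightarrow> ('a \<Rightarrow> 'a \<Rightarrow> bool) \<Rightarrow> 'a \<Rightarrow> 'a \<Rightarrow> nat" where
  "gdist V E u v = (LEAST n. (u, v) \<in> (edges V E) ^^ n)"

definition sphere :: "'a set \<Rightarrow> ('a \<Rightarrow> 'a \<Rightarrow> bool) \<Rightarrow> nat \<Rightarrow> 'a \<Rightarrow> 'a set" where
  "sphere V E i u = {w \<in> V. gdist V E u w = i}"

definition nbhd :: "'a set \<Rightarrow> ('a \<Rightarrow> 'a \<Rightarrow> bool) \<Rightarrow> 'a \<Rightarrow> 'a set" where
  "nbhd V E u = {v \<in> V. E u v}"

definition regular_of :: "'a set \<Rightarrow> ('a \<Rightarrow> 'a \<Rightarrow> bool) \<Rightarrow> nat \<Rightarrow> bool" where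
  "regular_of V E k \<longleftrightarrow> (\<forall>u\<in>V. card (nbhd V E u) = k)"

definition aut_subgroup :: "'a set \<Rightarrow> ('a \<Rightarrow> 'a \<Rightarrow> bool) \<Rightarrow> ('a \<Rightarrow> 'a) set \<Rightarrow> bool" where
  "aut_subgroup V E G \<longleftrightarrow>
     id \<in> G \<and>
     (\<forall>g\<in>G. bij_betw g V V \<and> (\<forall>x. x \<notin> V \<longrightarrow> g x = x) \<and>
              (\<forall>u\<in>V. \<forall>v\<in>V. E u v \<longleftrightarrow> E (g u) (g v))) \<and>
     (\<forall>g\<in>G. \<forall>h\<in>G. g \<circ> h \<in> G) \<and>
     (\<forall>g\<in>G. \<exists>h\<in>G. \<forall>x. h (g x) = x)"

definition diameter_ge2 :: "'a set \<Rightarrow> ('a \<Rightarrow> 'a \<Rightarrow> bool) \<Rightarrow> bool" where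
  "diameter_ge2 V E \<longleftrightarrow> (\<exists>u\<in>V. \<exists>w\<in>V. gdist V E u w \<ge> 2)"

definition dist2_transitive :: "'a set \<Rightarrow> ('a \<Rightarrow> 'a \<Rightarrow> bool) \<Rightarrow> ('a \<Rightarrow> 'a) set \<Rightarrow> bool" where
  "dist2_transitive V E G \<longleftrightarrow>
     diameter_ge2 V E \<and>
     (\<forall>u\<in>V. \<forall>v\<in>V. \<exists>g\<in>G. g u = v) \<and>
     (\<forall>u\<in>V. \<forall>i\<in>{1,2}. \<forall>v\<in>sphere V E i u. \<forall>w\<in>sphere V E i u. \<exists>g\<in>G. g u = u \<and> g v = w)"

definition b_count :: "'a set \<Rightarrow> ('a \<Rightarrow> 'a \<Rightarrow> bool) \<Rightarrow> nat \<Rightarrow> 'a \<Rightarrow> 'a \<Rightarrow> nat" where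
  "b_count V E i u w = card {x \<in> nbhd V E w. gdist V E u x = i + 1}"

definition c_count :: "'a set \<Rightarrow> ('a \<Rightarrow> 'a \<Rightarrow> bool) \<Rightarrow> nat \<Rightarrow> 'a \<Rightarrow> 'a \<Rightarrow> nat" where
  "c_count V E i u w = card {x \<in> nbhd V E w. gdist V E u x + 1 = i}"

definition is_b :: "'a set \<Rightarrow> ('a \<Rightarrow> 'a \<Rightarrow> bool) \<Rightarrow> nat \<Rightarrow> nat \<Rightarrow> bool" where
  "is_b V E i n \<longleftrightarrow> (\<forall>u\<in>V. \<forall>w\<in>V. gdist V E u w = i \<longrightarrow> b_count V E i u w = n)"

definition is_c :: "'a set \<Rightarrow> ('a \<Rightarrow> 'a \<Rightarrow> bool) \<Rightarrow> nat \<Rightarrow> nat \<Rightarrow> bool" where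
  "is_c V E i n \<longleftrightarrow> (\<forall>u\<in>V. \<forall>w\<in>V. gdist V E u w = i \<longrightarrow> c_count V E i u w = n)"

definition arc_transitive :: "'a set \<Rightarrow> ('a \<Rightarrow> 'a \<Rightarrow> bool) \<Rightarrow> ('a \<Rightarrow> 'a) set \<Rightarrow> bool" where
  "arc_transitive V E G \<longleftrightarrow>
     (\<forall>u\<in>V. \<forall>v\<in>V. \<forall>u'\<in>V. \<forall>v'\<in>V. E u v \<longrightarrow> E u' v' \<longrightarrow> (\<exists>g\<in>G. g u = u' \<and> g v = v'))"

definition is_2geodesic :: "'a set \<Rightarrow> ('a \<Rightarrow> 'a \<Rightarrow> bool) \<Rightarrow> 'a \<times> 'a \<times> 'a \<Rightarrow> bool" where
  "is_2geodesic V E t = (case t of (u, v, w) \<Rightarrow>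
     u \<in> V \<and> v \<in> V \<and> w \<in> V \<and> E u v \<and> E v w \<and> u \<noteq> w \<and> \<not> E u w)"

definition complete_graph :: "'a set \<Rightarrow> ('a \<Rightarrow> 'a \<Rightarrow> bool) \<Rightarrow> bool" where
  "complete_graph V E \<longleftrightarrow> (\<forall>u\<in>V. \<forall>v\<in>V. u \<noteq> v \<longrightarrow> E u v)"

definition geod2_transitive :: "'a set \<Rightarrow> ('a \<Rightarrow> 'a \<Rightarrow> bool) \<Rightarrow> ('a \<Rightarrow> 'a) set \<Rightarrow> bool" where
  "geod2_transitive V E G \<longleftrightarrow>
     arc_transitive V E G \<and> \<not> complete_graph V E \<and>
     (\<forall>u v w u' v' w'. is_2geodesic V E (u, v, w) \<longrightarrow> is_2geodesic V E (u', v', w') \<longrightarrow>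
        (\<exists>g\<in>G. g u = u' \<and> g v = v' \<and> g w = w'))"

end

theory Submission
  imports Defs
begin

text \<open>Fix a vertex \<open>u\<close> with stabiliser \<open>G\<^sub>u\<close> and count the 2-geodesics \<open>(u, v, w)\<close> as pairs
  \<open>(v, w) \<in> \<Gamma>(u) \<times> \<Gamma>\<^sub>2(u)\<close>: there are \<open>k b\<^sub>1 = |\<Gamma>\<^sub>2(u)| c\<^sub>2\<close> of them. Since \<open>G\<^sub>u\<close> is
  transitive on \<open>\<Gamma>(u)\<close> and on \<open>\<Gamma>\<^sub>2(u)\<close>, a \<open>G\<^sub>u\<close>-orbit of such pairs has constant fibres \<open>m\<close>
  over \<open>\<Gamma>(u)\<close> and \<open>0 < n \<le> c\<^sub>2\<close> over \<open>\<Gamma>\<^sub>2(u)\<close>, and the same double count gives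
  \<open>m c\<^sub>2 = n b\<^sub>1\<close>. If \<open>b\<^sub>1\<close> and \<open>c\<^sub>2\<close> are coprime this forces \<open>n = c\<^sub>2\<close>, so the orbit contains
  every 2-geodesic starting at \<open>u\<close>. Both hypotheses of the theorem imply \<open>gcd b\<^sub>1 c\<^sub>2 = 1\<close>.\<close>

lemma card_relation_eq_mult:
  assumes "finite A" "finite B" "R \<subseteq> A \<times> B" "\<forall>a\<in>A. card (R `` {a}) = m"
  shows "card R = card A * m"
proof -
  have "R = Sigma A (\<lambda>a. R `` {a})" using assms(3) by auto
  moreover have "\<forall>a\<in>A. finite (R `` {a})" using assms(2,3) by (auto intro: finite_subset)
  ultimately have "card R = (\<Sum>a\<in>A. card (R `` {a}))" using assms(1) by (metis card_SigmaI)
  with assms(4) show ?thesis by simp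
qed

lemma subrelation_eq_if_coprime_fibres:
  fixes b c m n :: nat
  assumes fin: "finite A" "finite B" and P: "P \<subseteq> A \<times> B" and R: "R \<subseteq> P" "R \<noteq> {}"
    and P_out: "\<forall>a\<in>A. card (P `` {a}) = b" and P_in: "\<forall>y\<in>B. card (P\<inverse> `` {y}) = c"
    and R_out: "\<forall>a\<in>A. card (R `` {a}) = m" and R_in: "\<forall>y\<in>B. card (R\<inverse> `` {y}) = n"
    and "coprime b c"
  shows "R = P"
proof -
  have P_conv: "P\<inverse> \<subseteq> B \<times> A" and R_conv: "R\<inverse> \<subseteq> B \<times> A" using P R by auto
  have fibre_finite: "finite (P\<inverse> `` {y})" for y using P_conv fin(1) by (auto intro: finite_subset)
  have fibre_subset: "R\<inverse> `` {y} \<subseteq> P\<inverse> `` {y}" for y using R(1) by auto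
  obtain a0 y0 where a0y0: "(a0, y0) \<in> R" using R(2) by auto
  then have "a0 \<in> A" "y0 \<in> B" using P R(1) by auto
  then have "card A > 0" using fin(1) by (auto simp: card_gt_0_iff)
  have "a0 \<in> R\<inverse> `` {y0}" using a0y0 by auto
  then have "n > 0" using R_in \<open>y0 \<in> B\<close> fibre_finite[of y0] fibre_subset[of y0]
    by (metis card_gt_0_iff empty_iff finite_subset)
  have "n \<le> c" using R_in P_in \<open>y0 \<in> B\<close> card_mono[OF fibre_finite fibre_subset, of y0] by simp
  have "card A * b = card B * c"
    using card_relation_eq_mult[OF fin P P_out] card_relation_eq_mult[OF fin(2,1) P_conv P_in] by simp
  moreover have "card A * m = card B * n"
    using card_relation_eq_mult[OF fin _ R_out] card_relation_eq_mult[OF fin(2,1) R_conv R_in] P R(1)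
    by auto
  ultimately have "card A * (m * c) = card A * (n * b)" by (metis mult.assoc mult.commute)
  then have "c dvd n * b" using \<open>card A > 0\<close> by (metis dvd_triv_right mult_left_cancel not_gr0)
  then have "c dvd n" using \<open>coprime b c\<close> by (metis coprime_commute coprime_dvd_mult_left_iff)
  then have "n = c" using \<open>n > 0\<close> \<open>n \<le> c\<close> by (simp add: dvd_imp_le le_antisym)
  then have "R\<inverse> `` {y} = P\<inverse> `` {y}" if "y \<in> B" for y
    using that R_in P_in card_subset_eq[OF fibre_finite fibre_subset] by simp
  then show "R = P" using P R(1) by blast
qed

lemma card_Image_eq_if_transitive:
  assumes "finite B" "R \<subseteq> A \<times> B" "\<forall>h\<in>H. inj h"
    and "\<forall>h\<in>H. \<forall>(a, b)\<in>R. (h a, h b) \<in> R" and "\<forall>x\<in>A. \<forall>y\<in>A. \<exists>h\<in>H. h x = y"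
    and "x \<in> A" "y \<in> A"
  shows "card (R `` {x}) = card (R `` {y})"
proof -
  have le: "card (R `` {x}) \<le> card (R `` {y})" if xy: "x \<in> A" "y \<in> A" for x y
  proof -
    obtain h where h: "h \<in> H" "h x = y" using assms(5) xy by blast
    have "h ` (R `` {x}) \<subseteq> R `` {y}" using assms(4) h by fastforce
    moreover have "finite (R `` {y})" using assms(1,2) by (metis Image_subset finite_subset)
    moreover have "inj_on h (R `` {x})" using assms(3) h by (meson inj_on_subset subset_UNIV)
    ultimately show ?thesis by (meson card_inj_on_le)
  qed
  show ?thesis using le[OF assms(6,7)] le[OF assms(7,6)] by (rule antisym)
qed

locale connected_simple_graph =
  fixes V :: "'a set" and E :: "'a \<Rightarrow> 'a \<Rightarrow> bool"
  assumes simple: "simple_graph V E" and connected: "connected_graph V E"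
begin

lemma finite_V: "finite V"
  using simple by (simp add: simple_graph_def)

lemma E_sym: "u \<in> V \<Longrightarrow> v \<in> V \<Longrightarrow> E u v \<longleftrightarrow> E v u"
  using simple by (simp add: simple_graph_def)

lemma E_irrefl: "u \<in> V \<Longrightarrow> \<not> E u u"
  using simple by (simp add: simple_graph_def)

lemma gdist_eq_iff:
  assumes "u \<in> V" "w \<in> V"
  shows "gdist V E u w = n \<longleftrightarrow>
    (u, w) \<in> edges V E ^^ n \<and> (\<forall>m<n. (u, w) \<notin> edges V E ^^ m)"
proof -
  let ?walk = "\<lambda>n. (u, w) \<in> edges V E ^^ n"
  have "\<exists>n. ?walk n"
    using connected assms rtrancl_power unfolding connected_graph_def by blast
  then have "?walk (LEAST n. ?walk n)" and "\<forall>m<(LEAST n. ?walk n). \<not> ?walk m"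
    by (auto intro: LeastI_ex dest: not_less_Least)
  then show ?thesis unfolding gdist_def by (metis Least_equality leI)
qed

lemma gdist_eq_1_iff: "u \<in> V \<Longrightarrow> w \<in> V \<Longrightarrow> gdist V E u w = 1 \<longleftrightarrow> E u w"
  by (auto simp: gdist_eq_iff edges_def less_Suc_eq E_irrefl)

lemma gdist_eq_2_iff:
  "u \<in> V \<Longrightarrow> w \<in> V \<Longrightarrow>
    gdist V E u w = 2 \<longleftrightarrow> u \<noteq> w \<and> \<not> E u w \<and> (\<exists>v\<in>V. E u v \<and> E v w)"
  by (auto simp: gdist_eq_iff numeral_2_eq_2 edges_def relcomp_unfold less_Suc_eq)

lemma is_2geodesic_iff:
  "is_2geodesic V E (u, v, w) \<longleftrightarrow>
    u \<in> V \<and> v \<in> V \<and> w \<in> V \<and> E u v \<and> E v w \<and> gdist V E u w = 2"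
  by (auto simp: is_2geodesic_def gdist_eq_2_iff)

lemma not_complete_if_diameter_ge2:
  assumes "diameter_ge2 V E"
  shows "\<not> complete_graph V E"
proof
  assume complete: "complete_graph V E"
  obtain u w where uw: "u \<in> V" "w \<in> V" and far: "gdist V E u w \<ge> 2"
    using assms by (auto simp: diameter_ge2_def)
  show False
  proof (cases "u = w")
    case True
    then have "gdist V E u w = 0" using uw by (simp add: gdist_eq_iff)
    with far show False by simp
  next
    case False
    then have "gdist V E u w = 1" using complete uw gdist_eq_1_iff by (simp add: complete_graph_def)
    with far show False by simp
  qed
qed

definition two_geodesics_from :: "'a \<Rightarrow> ('a \<times> 'a) set" where
  "two_geodesics_from u = {(v, w). is_2geodesic V E (u, v, w)}"

lemma two_geodesics_from_subset:
  "two_geodesics_from u \<subseteq> nbhd V E u \<times> sphere V E 2 u"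
  by (auto simp: two_geodesics_from_def is_2geodesic_iff nbhd_def sphere_def)

lemma card_two_geodesics_from_Image:
  assumes "is_b V E 1 b1" "u \<in> V" "v \<in> nbhd V E u"
  shows "card (two_geodesics_from u `` {v}) = b1"
proof -
  have "v \<in> V" "E u v" using assms(3) by (auto simp: nbhd_def)
  then have "gdist V E u v = 1" using assms(2) gdist_eq_1_iff by blast
  then have "b_count V E 1 u v = b1" using assms(1,2) \<open>v \<in> V\<close> by (simp add: is_b_def)
  moreover have "two_geodesics_from u `` {v} = {x \<in> nbhd V E v. gdist V E u x = 1 + 1}"
    using assms(2,3) by (auto simp: two_geodesics_from_def is_2geodesic_iff nbhd_def)
  ultimately show ?thesis by (simp add: b_count_def)
qed

lemma card_two_geodesics_from_converse_Image:
  assumes "is_c V E 2 c2" "u \<in> V" "w \<in> sphere V E 2 u"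
  shows "card ((two_geodesics_from u)\<inverse> `` {w}) = c2"
proof -
  have "w \<in> V" "gdist V E u w = 2" using assms(3) by (auto simp: sphere_def)
  then have "c_count V E 2 u w = c2" using assms(1,2) by (simp add: is_c_def)
  moreover have "{x \<in> nbhd V E w. gdist V E u x + 1 = 2} = {x \<in> nbhd V E w. E u x}"
    using assms(2) gdist_eq_1_iff[of u] by (auto simp: nbhd_def)
  moreover have "(two_geodesics_from u)\<inverse> `` {w} = {x \<in> nbhd V E w. E u x}"
    using assms(2) \<open>w \<in> V\<close> \<open>gdist V E u w = 2\<close>
    by (auto simp: two_geodesics_from_def is_2geodesic_iff nbhd_def E_sym)
  ultimately show ?thesis by (simp add: c_count_def)
qed

end

locale graph_automorphism_group = connected_simple_graph +
  fixes G :: "('a \<Rightarrow> 'a) set"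
  assumes aut_subgroup: "aut_subgroup V E G"
begin

lemma id_in_G: "id \<in> G"
  using aut_subgroup by (simp add: aut_subgroup_def)

lemma aut_in_V: "g \<in> G \<Longrightarrow> x \<in> V \<Longrightarrow> g x \<in> V"
  using aut_subgroup bij_betw_apply by (fastforce simp: aut_subgroup_def)

lemma aut_E_iff: "g \<in> G \<Longrightarrow> x \<in> V \<Longrightarrow> y \<in> V \<Longrightarrow> E (g x) (g y) \<longleftrightarrow> E x y"
  using aut_subgroup by (simp add: aut_subgroup_def)

lemma aut_inj:
  assumes "g \<in> G"
  shows "inj g"
proof -
  obtain h where "\<forall>x. h (g x) = x" using aut_subgroup assms by (auto simp: aut_subgroup_def)
  then show ?thesis by (metis injI)
qed

lemma aut_comp: "g \<in> G \<Longrightarrow> h \<in> G \<Longrightarrow> g \<circ> h \<in> G"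
  using aut_subgroup by (simp add: aut_subgroup_def)

lemma aut_is_2geodesic:
  assumes "g \<in> G" "is_2geodesic V E (u, v, w)"
  shows "is_2geodesic V E (g u, g v, g w)"
  using assms aut_in_V aut_E_iff aut_inj[OF assms(1)]
  by (auto simp: is_2geodesic_def inj_eq)

definition stabiliser :: "'a \<Rightarrow> ('a \<Rightarrow> 'a) set" where
  "stabiliser u = {g \<in> G. g u = u}"

lemma stabiliser_comp: "g \<in> stabiliser u \<Longrightarrow> h \<in> stabiliser u \<Longrightarrow> g \<circ> h \<in> stabiliser u"
  by (simp add: stabiliser_def aut_comp)

lemma stabiliser_orbit_subset_two_geodesics_from:
  assumes "is_2geodesic V E (u, v, w)"
  shows "(\<lambda>g. (g v, g w)) ` stabiliser u \<subseteq> two_geodesics_from u"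
proof
  fix p assume "p \<in> (\<lambda>g. (g v, g w)) ` stabiliser u"
  then obtain g where g: "g \<in> G" "g u = u" "p = (g v, g w)" by (auto simp: stabiliser_def)
  then show "p \<in> two_geodesics_from u"
    using aut_is_2geodesic[OF g(1) assms] by (simp add: two_geodesics_from_def)
qed

lemma stabiliser_orbit_Image_card_eq:
  assumes R: "R = (\<lambda>g. (g v, g w)) ` stabiliser u" and "R \<subseteq> A \<times> B" "finite B"
    and "\<forall>x\<in>A. \<forall>y\<in>A. \<exists>h\<in>stabiliser u. h x = y" "x \<in> A" "y \<in> A"
  shows "card (R `` {x}) = card (R `` {y})"
proof (rule card_Image_eq_if_transitive[OF assms(3,2) _ _ assms(4-6)])
  show "\<forall>h\<in>stabiliser u. inj h" by (simp add: stabiliser_def aut_inj)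
  show "\<forall>h\<in>stabiliser u. \<forall>(a, b)\<in>R. (h a, h b) \<in> R"
  proof (intro ballI, clarify)
    fix h a b assume "h \<in> stabiliser u" "(a, b) \<in> R"
    then obtain g where "g \<in> stabiliser u" "a = g v" "b = g w" using R by blast
    then have "((h \<circ> g) v, (h \<circ> g) w) \<in> R" using R stabiliser_comp[OF \<open>h \<in> _\<close>] by blast
    then show "(h a, h b) \<in> R" using \<open>a = g v\<close> \<open>b = g w\<close> by simp
  qed
qed

end

locale dist2_transitive_graph = graph_automorphism_group +
  assumes dist2_transitive: "dist2_transitive V E G"
begin

lemma vertex_transitive: "u \<in> V \<Longrightarrow> v \<in> V \<Longrightarrow> \<exists>g\<in>G. g u = v"
  using dist2_transitive by (simp add: dist2_transitive_def)

lemma stabiliser_transitive_nbhd: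
  assumes "u \<in> V"
  shows "\<forall>x\<in>nbhd V E u. \<forall>y\<in>nbhd V E u. \<exists>g\<in>stabiliser u. g x = y"
proof -
  have "sphere V E 1 u = nbhd V E u"
    using assms gdist_eq_1_iff by (auto simp: sphere_def nbhd_def)
  moreover have "\<forall>x\<in>sphere V E 1 u. \<forall>y\<in>sphere V E 1 u. \<exists>g\<in>G. g u = u \<and> g x = y"
    using dist2_transitive assms unfolding dist2_transitive_def by blast
  ultimately have "\<forall>x\<in>nbhd V E u. \<forall>y\<in>nbhd V E u. \<exists>g\<in>G. g u = u \<and> g x = y"
    by simp
  then show ?thesis unfolding stabiliser_def by blast
qed

lemma stabiliser_transitive_sphere2:
  assumes "u \<in> V"
  shows "\<forall>x\<in>sphere V E 2 u. \<forall>y\<in>sphere V E 2 u. \<exists>g\<in>stabiliser u. g x = y"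
proof -
  have "\<forall>x\<in>sphere V E 2 u. \<forall>y\<in>sphere V E 2 u. \<exists>g\<in>G. g u = u \<and> g x = y"
    using dist2_transitive assms unfolding dist2_transitive_def by blast
  then show ?thesis unfolding stabiliser_def by blast
qed

lemma stabiliser_transitive_two_geodesics:
  assumes b1: "is_b V E 1 b1" and c2: "is_c V E 2 c2" and "coprime b1 c2"
    and geod: "is_2geodesic V E (u, v, w)" and geod': "is_2geodesic V E (u, v', w')"
  shows "\<exists>g\<in>stabiliser u. g v = v' \<and> g w = w'"
proof -
  define R where "R = (\<lambda>g. (g v, g w)) ` stabiliser u"
  let ?A = "nbhd V E u" and ?B = "sphere V E 2 u" and ?P = "two_geodesics_from u"
  have u: "u \<in> V" using geod by (simp add: is_2geodesic_def)
  have fin: "finite ?A" "finite ?B" using finite_V by (auto simp: nbhd_def sphere_def)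
  have RP: "R \<subseteq> ?P" using stabiliser_orbit_subset_two_geodesics_from[OF geod] by (simp add: R_def)
  have "R \<noteq> {}" using id_in_G by (auto simp: R_def stabiliser_def)
  have "(v, w) \<in> ?P" using geod by (simp add: two_geodesics_from_def)
  then have vw: "v \<in> ?A" "w \<in> ?B" using two_geodesics_from_subset by blast+
  have RAB: "R \<subseteq> ?A \<times> ?B" using RP two_geodesics_from_subset by blast
  have "R\<inverse> = (\<lambda>g. (g w, g v)) ` stabiliser u" by (auto simp: R_def)
  have "R = ?P"
  proof (rule subrelation_eq_if_coprime_fibres[OF fin two_geodesics_from_subset RP \<open>R \<noteq> {}\<close>
        _ _ _ _ \<open>coprime b1 c2\<close>, where m = "card (R `` {v})" and n = "card (R\<inverse> `` {w})"])
    show "\<forall>a\<in>?A. card (?P `` {a}) = b1"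
      using card_two_geodesics_from_Image[OF b1 u] by blast
    show "\<forall>y\<in>?B. card (?P\<inverse> `` {y}) = c2"
      using card_two_geodesics_from_converse_Image[OF c2 u] by blast
    show "\<forall>a\<in>?A. card (R `` {a}) = card (R `` {v})"
      using stabiliser_orbit_Image_card_eq[OF R_def RAB fin(2) stabiliser_transitive_nbhd[OF u]] vw
      by blast
    show "\<forall>y\<in>?B. card (R\<inverse> `` {y}) = card (R\<inverse> `` {w})"
      using stabiliser_orbit_Image_card_eq[OF \<open>R\<inverse> = _\<close> _ fin(1) stabiliser_transitive_sphere2[OF u]]
        RAB vw by blast
  qed
  moreover have "(v', w') \<in> ?P" using geod' by (simp add: two_geodesics_from_def)
  ultimately obtain g where "g \<in> stabiliser u" "(v', w') = (g v, g w)"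
    unfolding R_def by blast
  then show ?thesis by auto
qed

lemma arc_transitive: "arc_transitive V E G"
  unfolding arc_transitive_def
proof (intro ballI impI)
  fix u v u' v' assume V: "u \<in> V" "v \<in> V" "u' \<in> V" "v' \<in> V" and "E u v" "E u' v'"
  obtain h where h: "h \<in> G" "h u = u'" using vertex_transitive V by blast
  have "h v \<in> nbhd V E u'" "v' \<in> nbhd V E u'"
    using h V \<open>E u v\<close> \<open>E u' v'\<close> aut_in_V aut_E_iff by (auto simp: nbhd_def)
  then obtain g where "g \<in> stabiliser u'" "g (h v) = v'"
    using stabiliser_transitive_nbhd V(3) by blast
  then show "\<exists>g\<in>G. g u = u' \<and> g v = v'"
    using h aut_comp by (intro bexI[of _ "g \<circ> h"]) (auto simp: stabiliser_def)
qed

lemma geod2_transitive_if_coprime: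
  assumes "is_b V E 1 b1" "is_c V E 2 c2" "coprime b1 c2"
  shows "geod2_transitive V E G"
  unfolding geod2_transitive_def
proof (intro conjI allI impI)
  show "arc_transitive V E G" by (rule arc_transitive)
  show "\<not> complete_graph V E"
    using dist2_transitive not_complete_if_diameter_ge2 by (simp add: dist2_transitive_def)
  fix u v w u' v' w'
  assume geod: "is_2geodesic V E (u, v, w)" and geod': "is_2geodesic V E (u', v', w')"
  have "u \<in> V" "u' \<in> V" using geod geod' by (simp_all add: is_2geodesic_def)
  then obtain h where h: "h \<in> G" "h u = u'" using vertex_transitive by blast
  have "is_2geodesic V E (u', h v, h w)" using aut_is_2geodesic[OF h(1) geod] h(2) by simp
  then obtain g where "g \<in> stabiliser u'" "g (h v) = v'" "g (h w) = w'"
    using stabiliser_transitive_two_geodesics[OF assms] geod' by blast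
  then show "\<exists>g\<in>G. g u = u' \<and> g v = v' \<and> g w = w'"
    using h aut_comp by (intro bexI[of _ "g \<circ> h"]) (auto simp: stabiliser_def)
qed

end

theorem lemma5p6:
  fixes V :: "'a set" and E :: "'a \<Rightarrow> 'a \<Rightarrow> bool" and G :: "('a \<Rightarrow> 'a) set"
    and k b1 c2 :: nat
  assumes "simple_graph V E" and "connected_graph V E"
    and "aut_subgroup V E G" and "dist2_transitive V E G"
    and "regular_of V E k" and "k \<ge> 2"
    and "is_b V E 1 b1" and "is_c V E 2 c2"
  shows "(gcd b1 k = 1 \<and> c2 dvd k \<longrightarrow> geod2_transitive V E G)
       \<and> (gcd b1 k = 1 \<and> gcd b1 c2 = 1 \<longrightarrow> geod2_transitive V E G)"
proof -
  interpret dist2_transitive_graph V E G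
    using assms(1-4) by unfold_locales
  have "coprime b1 c2" if "gcd b1 k = 1" "c2 dvd k"
    using that coprime_divisors[of b1 b1 c2 k] by (simp add: coprime_iff_gcd_eq_1)
  then show ?thesis
    using geod2_transitive_if_coprime[OF assms(7,8)] by (auto simp: coprime_iff_gcd_eq_1)
qed

end
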